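(* Let $n\ge1$ and $P=\{(i,j)\colon1\le i\le j\le n\}$ be the shifted staircase. Then $\sum_{p\in P}T_p^-\equiv^q \frac{\binom{n+1}{2}_q}{[2n]_q}$.
   Context: $P$ is ordered by $(i,j)\le(i',j')$ iff $i\le i'$ and $j\le j'$. $\mathcal{J}(P)$ is the set of order ideals. For $p\in P$, $I\in\mathcal{J}(P)$: $T_p^+(I)=1$ if $p$ is minimal in $P\setminus I$, else $0$; $T_p^-(I)=1$ if $p$ is maximal in $I$, else $0$; $T_p^q=T_p^+-qT_p^-$ with $q$ an indeterminate. For $f,g\colon\mathcal{J}(P)\to\mathbb{R}(q)$, $f\equiv^q g$ means $f-g=\sum_{p\in P}c_p(q)T_p^q$ for some $c_p(q)\in\mathbb{R}(q)$; an element of $\mathbb{R}(q)$ denotes a constant function. $[m]_q=1+q+\dots+q^{m-1}$, $[m]_q!=[m]_q[m-1]_q\cdots[1]_q$, and $\binom{m}{k}_q=\frac{[m]_q!}{[k]_q![m-k]_q!}$. *)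

theory Defs
  imports Main "HOL-Computational_Algebra.Fraction_Field" "HOL-Computational_Algebra.Polynomial"
begin

type_synonym ratfun = "real poly fract"

definition qvar :: ratfun where
  "qvar = Fraction_Field.Fract [:0, 1:] 1"

definition qint :: "nat \<Rightarrow> ratfun" where
  "qint m = (\<Sum>k<m. qvar ^ k)"

definition qfact :: "nat \<Rightarrow> ratfun" where
  "qfact m = (\<Prod>k\<in>{1..m}. qint k)"

definition qbinom :: "nat \<Rightarrow> nat \<Rightarrow> ratfun" where
  "qbinom m k = qfact m / (qfact k * qfact (m - k))"

definition ple :: "nat \<times> nat \<Rightarrow> nat \<times> nat \<Rightarrow> bool" where
  "ple a b \<longleftrightarrow> fst a \<le> fst b \<and> snd a \<le> snd b"

definition shifted_staircase :: "nat \<Rightarrow> (nat \<times> nat) set" where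
  "shifted_staircase n = {(i, j). 1 \<le> i \<and> i \<le> j \<and> j \<le> n}"

definition order_ideals :: "(nat \<times> nat) set \<Rightarrow> (nat \<times> nat) set set" where
  "order_ideals P = {I. I \<subseteq> P \<and> (\<forall>x\<in>I. \<forall>y\<in>P. ple y x \<longrightarrow> y \<in> I)}"

definition Tplus :: "(nat \<times> nat) set \<Rightarrow> nat \<times> nat \<Rightarrow> (nat \<times> nat) set \<Rightarrow> ratfun" where
  "Tplus P p I = (if p \<in> P - I \<and> (\<forall>y\<in>P - I. ple y p \<longrightarrow> y = p) then 1 else 0)"

definition Tminus :: "(nat \<times> nat) set \<Rightarrow> nat \<times> nat \<Rightarrow> (nat \<times> nat) set \<Rightarrow> ratfun" where
  "Tminus P p I = (if p \<in> I \<and> (\<forall>y\<in>I. ple p y \<longrightarrow> y = p) then 1 else 0)"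

definition Tq :: "(nat \<times> nat) set \<Rightarrow> nat \<times> nat \<Rightarrow> (nat \<times> nat) set \<Rightarrow> ratfun" where
  "Tq P p I = Tplus P p I - qvar * Tminus P p I"

definition qequiv :: "(nat \<times> nat) set \<Rightarrow> ((nat \<times> nat) set \<Rightarrow> ratfun) \<Rightarrow> ((nat \<times> nat) set \<Rightarrow> ratfun) \<Rightarrow> bool" where
  "qequiv P f g \<longleftrightarrow> (\<exists>c :: nat \<times> nat \<Rightarrow> ratfun.
      \<forall>I\<in>order_ideals P. f I - g I = (\<Sum>p\<in>P. c p * Tq P p I))"

end

theory Submission
  imports Defs "HOL-Computational_Algebra.Polynomial_Factorial"
begin

(* For suitable coefficients c the residual R(I) = \<Sum>p. T_p^-(I) - c_p T_p^q(I) is constant on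
   J(P), which is the claim with constant R({}).  Every ideal is built from {} by adding, one at a
   time, a minimal element p = (i, j) of the complement.  This changes T^+ and T^- only at p, at
   its upper covers (i, j+1), (i+1, j), which may become minimal, and at its lower covers
   (i-1, j), (i, j-1), which may stop being maximal.  Whether (i-1, j+1) lies in I decides both
   whether (i, j+1) becomes minimal and whether (i-1, j) was maximal, so the relation
   c_(i,j+1) = 1 + q c_(i-1,j) makes the contribution of this pair independent of I; likewise
   for (i+1, j-1).  The coefficients are affine in q^(i-1) + q^(j-1), with a separate formula on
   the diagonal; the denominator 1 + q^n makes the virtual coefficient at (1, n+1) vanish, and a
   three-term recurrence then makes R invariant.  Finally R({}) = -c_(1,1), which equals
   [n+1 choose 2]_q / [2n]_q. *)

lemma qvar_power: "qvar ^ k = to_fract ([:0, 1:] ^ k)"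
  by (induction k) (simp_all add: qvar_def to_fract_def One_fract_def)

lemma qvar_power_neq_1: "k \<ge> 1 \<Longrightarrow> qvar ^ k \<noteq> 1"
proof
  assume "k \<ge> 1" and "qvar ^ k = 1"
  then have "poly (1 - [:0, 1:] ^ k) (2::real) = 0"
    by (metis qvar_power to_fract_1 to_fract_eq_iff diff_self poly_0)
  moreover have "(2::real) ^ k \<ge> 2 ^ 1"
    using \<open>k \<ge> 1\<close> by (intro power_increasing) auto
  ultimately show False by simp
qed

lemma one_plus_qvar_power_neq_0: "1 + qvar ^ k \<noteq> 0"
proof
  assume "1 + qvar ^ k = 0"
  then have "poly (1 + [:0, 1:] ^ k) (1::real) = 0"
    by (metis qvar_power to_fract_1 to_fract_add to_fract_eq_0_iff poly_0)
  then show False by simp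
qed

lemma qvar_neq_1: "qvar \<noteq> 1"
  using qvar_power_neq_1[of 1] by simp

lemma one_plus_qvar_neq_0: "1 + qvar \<noteq> 0"
  using one_plus_qvar_power_neq_0[of 1] by simp

lemma qint_closed_form: "qint m = (1 - qvar ^ m) / (1 - qvar)"
  unfolding qint_def using qvar_neq_1 by (simp add: sum_gp_strict)

lemma qfact_Suc: "qfact (Suc m) = qint (Suc m) * qfact m"
  unfolding qfact_def by (simp add: atLeastAtMostSuc_conv mult.commute)

lemma qint_neq_0: "m \<ge> 1 \<Longrightarrow> qint m \<noteq> 0"
  using qvar_power_neq_1 qvar_neq_1 by (simp add: qint_closed_form)

lemma qfact_neq_0: "qfact m \<noteq> 0"
  by (induction m) (simp_all add: qfact_Suc qint_neq_0 qfact_def)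

lemma qbinom_Suc_2:
  assumes "m \<ge> 1"
  shows "qbinom (Suc m) 2 = qint (Suc m) * qint m / qint 2"
proof -
  obtain k where m: "m = Suc k" using assms by (cases m) auto
  have "qfact 2 = qint 2"
    by (simp add: numeral_2_eq_2 qfact_Suc) (simp add: qfact_def qint_def)
  then show ?thesis
    using qfact_neq_0[of k] by (simp add: qbinom_def m qfact_Suc)
qed

definition off_coeff :: "nat \<Rightarrow> nat \<Rightarrow> nat \<Rightarrow> ratfun" where
  "off_coeff n a b = (1 - (qvar ^ a + qvar ^ b) / (1 + qvar ^ n)) / (1 - qvar)"

definition diag_coeff :: "nat \<Rightarrow> nat \<Rightarrow> ratfun" where
  "diag_coeff n a = (qvar / (1 + qvar) - qvar ^ a / (1 + qvar ^ n)) / (1 - qvar)"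

lemma qvar_nonzero_denominators:
  "(1::ratfun) - qvar \<noteq> 0" "(1::ratfun) + qvar \<noteq> 0" "(1::ratfun) + qvar ^ n \<noteq> 0"
  using qvar_neq_1 one_plus_qvar_neq_0 one_plus_qvar_power_neq_0 by auto

lemma off_coeff_shift: "off_coeff n (Suc a) (Suc b) = 1 + qvar * off_coeff n a b"
  using qvar_nonzero_denominators
  by (simp add: off_coeff_def divide_simps) (simp add: algebra_simps)

lemma off_coeff_recurrence:
  "1 + (1 + qvar) * off_coeff n a b = off_coeff n a (Suc b) + off_coeff n (Suc a) b"
  using qvar_nonzero_denominators
  by (simp add: off_coeff_def divide_simps) (simp add: algebra_simps)

lemma diag_coeff_recurrence: "1 + (1 + qvar) * diag_coeff n a = off_coeff n a (Suc a)"
  using qvar_nonzero_denominators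
  by (simp add: off_coeff_def diag_coeff_def divide_simps) (simp add: algebra_simps)

lemma diag_coeff_pair:
  "1 + qvar * diag_coeff n a + diag_coeff n (Suc a) = off_coeff n (Suc a) (Suc a)"
  using qvar_nonzero_denominators
  by (simp add: off_coeff_def diag_coeff_def divide_simps) (simp add: algebra_simps)

lemma off_coeff_0_boundary: "off_coeff n 0 n = 0"
  using qvar_nonzero_denominators by (simp add: off_coeff_def)

lemma diag_coeff_0:
  assumes "n \<ge> 1"
  shows "- diag_coeff n 0 = qbinom (n + 1) 2 / qint (2 * n)"
proof -
  have "qint 2 = 1 + qvar"
    by (simp add: qint_def numeral_2_eq_2)
  then have binom:
    "qbinom (n + 1) 2 = (1 - qvar * qvar ^ n) * (1 - qvar ^ n) / ((1 - qvar)\<^sup>2 * (1 + qvar))"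
    using qbinom_Suc_2[OF assms] by (simp add: qint_closed_form power2_eq_square)
  have qint_double: "qint (2 * n) = (1 - qvar ^ n) * (1 + qvar ^ n) / (1 - qvar)"
    by (simp add: qint_closed_form power_mult power2_eq_square algebra_simps)
  have "1 - qvar ^ n \<noteq> 0"
    using qvar_power_neq_1 assms by auto
  then show ?thesis
    using qvar_nonzero_denominators unfolding binom qint_double diag_coeff_def
    by (simp add: divide_simps) (simp add: algebra_simps power2_eq_square)
qed

lemma ple_refl [simp]: "ple x x"
  by (simp add: ple_def)

lemma ple_antisym: "ple x y \<Longrightarrow> ple y x \<Longrightarrow> x = y"
  by (auto simp: ple_def prod_eq_iff)

lemma order_idealsD:
  assumes "I \<in> order_ideals P"
  shows "I \<subseteq> P" and "x \<in> I \<Longrightarrow> y \<in> P \<Longrightarrow> ple y x \<Longrightarrow> y \<in> I"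
  using assms by (auto simp: order_ideals_def)

lemma order_ideal_insert_above:
  assumes "I \<in> order_ideals P" "p \<in> P" "p \<notin> I" "ple p y" "y \<noteq> p"
  shows "y \<notin> insert p I"
  using assms order_idealsD(2)[OF assms(1), of y p] by auto

lemma order_ideal_insert_below:
  assumes "insert p I \<in> order_ideals P" "y \<in> P" "ple y p" "y \<noteq> p"
  shows "y \<in> I"
  using assms order_idealsD(2)[OF assms(1), of p y] by auto

lemma Tplus_outside: "x \<notin> P \<Longrightarrow> Tplus P x I = 0"
  by (simp add: Tplus_def)

lemma Tminus_outside: "I \<in> order_ideals P \<Longrightarrow> x \<notin> P \<Longrightarrow> Tminus P x I = 0"
  using order_idealsD(1) by (auto simp: Tminus_def)

type_synonym cell = "nat \<times> nat"

definition residual_term :: "cell set \<Rightarrow> (cell \<Rightarrow> ratfun) \<Rightarrow> cell set \<Rightarrow> cell \<Rightarrow> ratfun" where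
  "residual_term P c I x = Tminus P x I - c x * Tq P x I"

definition residual :: "cell set \<Rightarrow> (cell \<Rightarrow> ratfun) \<Rightarrow> cell set \<Rightarrow> ratfun" where
  "residual P c I = (\<Sum>x\<in>P. residual_term P c I x)"

lemma residual_term_outside:
  "I \<in> order_ideals P \<Longrightarrow> x \<notin> P \<Longrightarrow> residual_term P c I x = 0"
  by (simp add: residual_term_def Tq_def Tplus_outside Tminus_outside)

definition residual_term_change ::
    "cell set \<Rightarrow> (cell \<Rightarrow> ratfun) \<Rightarrow> cell set \<Rightarrow> cell \<Rightarrow> cell \<Rightarrow> ratfun" where
  "residual_term_change P c I p x = residual_term P c (insert p I) x - residual_term P c I x"

lemma residual_term_change_eq:
  assumes I: "I \<in> order_ideals P" and J: "insert p I \<in> order_ideals P"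
    and p: "p \<in> P" "p \<notin> I"
  shows "residual_term_change P c I p x =
    (if x = p then 1 + (1 + qvar) * c x
     else if ple p x then - c x * Tplus P x (insert p I)
     else if ple x p then - (1 + qvar * c x) * Tminus P x I
     else 0)"
proof -
  let ?J = "insert p I"
  note defs = residual_term_change_def residual_term_def Tq_def
  consider "x = p" | "x \<noteq> p" "ple p x" | "x \<noteq> p" "ple x p" "x \<in> P" | "x \<notin> P"
    | "\<not> ple p x" "\<not> ple x p"
    by blast
  then show ?thesis
  proof cases
    case 1
    have "Tminus P p ?J = 1"
      using order_ideal_insert_above[OF I p] by (auto simp: Tminus_def)
    moreover have "Tplus P p I = 1"
      using order_ideal_insert_below[OF J] p by (auto simp: Tplus_def)
    ultimately show ?thesis
      using 1 p by (simp add: defs Tplus_def Tminus_def algebra_simps)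
  next
    case 2
    then have "x \<notin> ?J" and "Tplus P x I = 0"
      using order_ideal_insert_above[OF I p] p by (auto simp: Tplus_def)
    then show ?thesis
      using 2 by (simp add: defs Tminus_def)
  next
    case 3
    then have "\<not> ple p x"
      using ple_antisym by blast
    moreover have "x \<in> I" and "Tminus P x ?J = 0"
      using 3 order_ideal_insert_below[OF J] by (auto simp: Tminus_def)
    ultimately show ?thesis
      using 3 by (simp add: defs Tplus_def algebra_simps)
  next
    case 4
    then have "x \<noteq> p" using p by auto
    with 4 show ?thesis
      using Tminus_outside[OF I] Tminus_outside[OF J] by (simp add: defs Tplus_outside)
  next
    case 5
    then have "x \<noteq> p" by auto
    have "P - I = insert p (P - ?J)" using p by auto
    then have "Tplus P x ?J = Tplus P x I" and "Tminus P x ?J = Tminus P x I"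
      using 5 \<open>x \<noteq> p\<close> by (auto simp: Tplus_def Tminus_def)
    then show ?thesis
      using 5 \<open>x \<noteq> p\<close> by (simp add: defs)
  qed
qed

lemma order_ideals_induct [consumes 2, case_names empty insert]:
  assumes "finite P" "I \<in> order_ideals P"
    and Q_empty: "Q {}"
    and Q_insert: "\<And>I p. I \<in> order_ideals P \<Longrightarrow> insert p I \<in> order_ideals P \<Longrightarrow>
      p \<in> P \<Longrightarrow> p \<notin> I \<Longrightarrow> Q I \<Longrightarrow> Q (insert p I)"
  shows "Q I"
proof -
  have "finite I"
    using assms(1) order_idealsD(1)[OF assms(2)] by (rule finite_subset[rotated])
  then show ?thesis
    using assms(2)
  proof (induction I rule: finite_ranking_induct[where f = "\<lambda>x. fst x + snd x"])
    case empty
    show ?case by (fact Q_empty)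
  next
    case (insert p I)
    show ?case
    proof (cases "p \<in> I")
      case True
      then show ?thesis using insert by (simp add: insert_absorb)
    next
      case False
      have "I \<in> order_ideals P"
        unfolding order_ideals_def
      proof (intro CollectI conjI ballI impI)
        show "I \<subseteq> P" using order_idealsD(1)[OF insert.prems] by blast
      next
        fix x y assume "x \<in> I" "y \<in> P" "ple y x"
        moreover have "y \<noteq> p"
        proof
          assume "y = p"
          with \<open>ple y x\<close> insert.hyps(2)[OF \<open>x \<in> I\<close>] have "x = p"
            by (auto simp: ple_def prod_eq_iff)
          with \<open>x \<in> I\<close> False show False by simp
        qed
        ultimately show "y \<in> I"
          using order_idealsD(2)[OF insert.prems, of x y] by auto
      qed
      moreover have "p \<in> P"
        using order_idealsD(1)[OF insert.prems] by blast
      ultimately show ?thesis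
        using insert.IH insert.prems False by (intro Q_insert) auto
    qed
  qed
qed

lemma qequiv_constant_if_residual:
  assumes "\<And>I. I \<in> order_ideals P \<Longrightarrow> residual P c I = C"
  shows "qequiv P (\<lambda>I. \<Sum>p\<in>P. Tminus P p I) (\<lambda>I. C)"
  unfolding qequiv_def
proof (intro exI[of _ c] ballI)
  fix I assume "I \<in> order_ideals P"
  then have "(\<Sum>p\<in>P. Tminus P p I) - (\<Sum>p\<in>P. c p * Tq P p I) = C"
    using assms unfolding residual_def residual_term_def sum_subtractf by simp
  then show "(\<Sum>p\<in>P. Tminus P p I) - C = (\<Sum>p\<in>P. c p * Tq P p I)"
    by (simp add: algebra_simps)
qed

lemma mem_shifted_staircase [simp]:
  "(a, b) \<in> shifted_staircase n \<longleftrightarrow> 1 \<le> a \<and> a \<le> b \<and> b \<le> n"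
  by (simp add: shifted_staircase_def)

lemma finite_shifted_staircase: "finite (shifted_staircase n)"
proof (rule finite_subset)
  show "shifted_staircase n \<subseteq> {0..n} \<times> {0..n}"
    by (auto simp: shifted_staircase_def)
qed simp

lemma Tminus_shifted_staircase:
  assumes I: "I \<in> order_ideals (shifted_staircase n)"
  shows "Tminus (shifted_staircase n) (a, b) I =
    (if (a, b) \<in> I \<and> (a, b + 1) \<notin> I \<and> (a + 1, b) \<notin> I then 1 else 0)"
proof -
  have "y = (a, b)"
    if ab: "(a, b) \<in> I" "(a, b + 1) \<notin> I" "(a + 1, b) \<notin> I" and y: "y \<in> I" "ple (a, b) y" for y
  proof (rule ccontr)
    assume "y \<noteq> (a, b)"
    obtain c d where yc: "y = (c, d)" by (cases y)
    have "(c, d) \<in> shifted_staircase n" "(a, b) \<in> shifted_staircase n"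
      using y ab order_idealsD(1)[OF I] yc by auto
    then consider "b < d" "(a, b + 1) \<in> shifted_staircase n" "ple (a, b + 1) y"
      | "(a + 1, b) \<in> shifted_staircase n" "ple (a + 1, b) y"
      using y \<open>y \<noteq> (a, b)\<close> yc by (fastforce simp: ple_def)
    then show False
      using order_idealsD(2)[OF I y(1)] ab by cases auto
  qed
  then show ?thesis
    unfolding Tminus_def by (auto simp: ple_def)
qed

lemma Tplus_shifted_staircase:
  assumes I: "I \<in> order_ideals (shifted_staircase n)"
  shows "Tplus (shifted_staircase n) (a, b) I =
    (if (a, b) \<in> shifted_staircase n - I \<and> (a = 1 \<or> (a - 1, b) \<in> I) \<and> (a = b \<or> (a, b - 1) \<in> I)
     then 1 else 0)"
proof -
  let ?P = "shifted_staircase n"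
  have lower: "(a = 1 \<or> (a - 1, b) \<in> I) \<and> (a = b \<or> (a, b - 1) \<in> I)"
    if ab: "(a, b) \<in> ?P" and min: "\<forall>y\<in>?P - I. ple y (a, b) \<longrightarrow> y = (a, b)"
  proof (intro conjI)
    show "a = 1 \<or> (a - 1, b) \<in> I"
      using ab min[rule_format, of "(a - 1, b)"] by (cases "a = 1") (auto simp: ple_def, linarith)
    show "a = b \<or> (a, b - 1) \<in> I"
      using ab min[rule_format, of "(a, b - 1)"] by (cases "a = b") (auto simp: ple_def, linarith)
  qed
  have minimal: "y = (a, b)"
    if ab: "(a = 1 \<or> (a - 1, b) \<in> I) \<and> (a = b \<or> (a, b - 1) \<in> I)"
      and y: "y \<in> ?P - I" "ple y (a, b)" for y
  proof (rule ccontr)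
    assume "y \<noteq> (a, b)"
    obtain c d where yc: "y = (c, d)" by (cases y)
    then consider "c < a" "a \<noteq> 1" "ple y (a - 1, b)" | "a \<noteq> b" "ple y (a, b - 1)"
      using y \<open>y \<noteq> (a, b)\<close> by (fastforce simp: ple_def)
    then show False
      using order_idealsD(2)[OF I _ y(1)[THEN DiffD1]] y ab by cases auto
  qed
  show ?thesis
    unfolding Tplus_def using lower minimal by auto
qed

context
  fixes n :: nat and I :: "cell set" and i j :: nat
  assumes I: "I \<in> order_ideals (shifted_staircase n)"
    and J: "insert (i, j) I \<in> order_ideals (shifted_staircase n)"
    and p: "(i, j) \<in> shifted_staircase n" "(i, j) \<notin> I"
begin

lemma Tplus_shifted_staircase_above_noncover:
  assumes "ple (i, j) x" "x \<notin> {(i, j), (i + 1, j), (i, j + 1)}"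
  shows "Tplus (shifted_staircase n) x (insert (i, j) I) = 0"
proof -
  obtain a b where x: "x = (a, b)" by (cases x)
  have ij: "1 \<le> i" "i \<le> a" "j \<le> b"
    "(a, b) \<noteq> (i, j)" "(a, b) \<noteq> (i + 1, j)" "(a, b) \<noteq> (i, j + 1)"
    using assms p x by (auto simp: ple_def)
  have above: "y \<notin> insert (i, j) I" if "ple (i, j) y" "y \<noteq> (i, j)" for y
    using order_ideal_insert_above[OF I p] that by blast
  have "(a \<noteq> 1 \<and> (a - 1, b) \<notin> insert (i, j) I) \<or>
      (a \<noteq> b \<and> (a, b - 1) \<notin> insert (i, j) I)"
  proof (cases "i < a")
    case True
    then have "ple (i, j) (a - 1, b)" "(a - 1, b) \<noteq> (i, j)"
      using ij by (auto simp: ple_def)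
    then show ?thesis
      using above True ij by auto
  next
    case False
    then have "a = i" "j < b" using ij by auto
    then have "ple (i, j) (a, b - 1)" "(a, b - 1) \<noteq> (i, j)" "a \<noteq> b"
      using ij p by (auto simp: ple_def)
    then show ?thesis
      using above by auto
  qed
  then show ?thesis
    unfolding x Tplus_shifted_staircase[OF J] by auto
qed

lemma Tminus_shifted_staircase_below_noncover:
  assumes "x \<in> shifted_staircase n" "ple x (i, j)" "x \<notin> {(i, j), (i - 1, j), (i, j - 1)}"
  shows "Tminus (shifted_staircase n) x I = 0"
proof -
  obtain a b where x: "x = (a, b)" by (cases x)
  have ab: "1 \<le> a" "a \<le> b" "a \<le> i" "b \<le> j"
    "(a, b) \<noteq> (i, j)" "(a, b) \<noteq> (i - 1, j)" "(a, b) \<noteq> (i, j - 1)"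
    using assms p x by (auto simp: ple_def)
  have below: "y \<in> I" if "y \<in> shifted_staircase n" "ple y (i, j)" "y \<noteq> (i, j)" for y
    using order_ideal_insert_below[OF J] that by blast
  have "(a, b + 1) \<in> I \<or> (a + 1, b) \<in> I"
  proof (cases "b < j")
    case True
    then have "(a, b + 1) \<in> shifted_staircase n" "ple (a, b + 1) (i, j)" "(a, b + 1) \<noteq> (i, j)"
      using ab p by (auto simp: ple_def)
    then show ?thesis
      using below by blast
  next
    case False
    then have "b = j" "a < i" using ab by auto
    then have "(a + 1, b) \<in> shifted_staircase n" "ple (a + 1, b) (i, j)" "(a + 1, b) \<noteq> (i, j)"
      using ab p by (auto simp: ple_def)
    then show ?thesis
      using below by blast
  qed
  then show ?thesis
    unfolding x Tminus_shifted_staircase[OF I] by auto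
qed

lemma Tplus_shifted_staircase_upper_covers:
  "Tplus (shifted_staircase n) (i, j + 1) (insert (i, j) I) =
     (if j < n \<and> (i = 1 \<or> (i - 1, j + 1) \<in> I) then 1 else 0)"
  "Tplus (shifted_staircase n) (i + 1, j) (insert (i, j) I) =
     (if i < j \<and> (i + 1 = j \<or> (i + 1, j - 1) \<in> I) then 1 else 0)"
  using order_ideal_insert_above[OF I p, of "(i, j + 1)"] order_ideal_insert_above[OF I p, of "(i + 1, j)"]
    p by (auto simp: Tplus_shifted_staircase[OF J] ple_def)

lemma Tminus_shifted_staircase_lower_covers:
  "Tminus (shifted_staircase n) (i - 1, j) I = (if 1 < i \<and> (i - 1, j + 1) \<notin> I then 1 else 0)"
  "Tminus (shifted_staircase n) (i, j - 1) I = (if i < j \<and> (i + 1, j - 1) \<notin> I then 1 else 0)"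
proof -
  have "(i - 1, j) \<in> I \<longleftrightarrow> 1 < i"
  proof
    assume "(i - 1, j) \<in> I"
    then have "(i - 1, j) \<in> shifted_staircase n" using order_idealsD(1)[OF I] by blast
    then show "1 < i" by (simp, linarith)
  next
    assume "1 < i"
    then show "(i - 1, j) \<in> I"
      using p by (intro order_ideal_insert_below[OF J]) (auto simp: ple_def)
  qed
  moreover have "(i, j - 1) \<in> I \<longleftrightarrow> i < j"
  proof
    assume "(i, j - 1) \<in> I"
    then have "(i, j - 1) \<in> shifted_staircase n" using order_idealsD(1)[OF I] by blast
    then show "i < j" by (simp, linarith)
  next
    assume "i < j"
    then show "(i, j - 1) \<in> I"
      using p by (intro order_ideal_insert_below[OF J]) (auto simp: ple_def)
  qed
  ultimately show
    "Tminus (shifted_staircase n) (i - 1, j) I = (if 1 < i \<and> (i - 1, j + 1) \<notin> I then 1 else 0)"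
    "Tminus (shifted_staircase n) (i, j - 1) I = (if i < j \<and> (i + 1, j - 1) \<notin> I then 1 else 0)"
    using p by (auto simp: Tminus_shifted_staircase[OF I])
qed

lemma residual_insert_shifted_staircase_local:
  "residual (shifted_staircase n) c (insert (i, j) I) - residual (shifted_staircase n) c I =
    (\<Sum>x\<in>{(i, j), (i, j + 1), (i + 1, j), (i - 1, j), (i, j - 1)}.
      residual_term_change (shifted_staircase n) c I (i, j) x)"
  unfolding residual_def sum_subtractf[symmetric] residual_term_change_def[symmetric]
proof (rule sum.mono_neutral_cong)
  fix x
  assume "x \<in> shifted_staircase n - {(i, j), (i, j + 1), (i + 1, j), (i - 1, j), (i, j - 1)}"
  then show "residual_term_change (shifted_staircase n) c I (i, j) x = 0"
    using Tplus_shifted_staircase_above_noncover[of x] Tminus_shifted_staircase_below_noncover[of x]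
    unfolding residual_term_change_eq[OF I J p] by auto
next
  fix x
  assume "x \<in> {(i, j), (i, j + 1), (i + 1, j), (i - 1, j), (i, j - 1)} - shifted_staircase n"
  then show "residual_term_change (shifted_staircase n) c I (i, j) x = 0"
    using residual_term_outside[OF I] residual_term_outside[OF J]
    by (simp add: residual_term_change_def)
qed (simp_all add: finite_shifted_staircase)

lemma residual_term_change_neighbours:
  "residual_term_change (shifted_staircase n) c I (i, j) (i, j) = 1 + (1 + qvar) * c (i, j)"
  "residual_term_change (shifted_staircase n) c I (i, j) (i, j + 1) =
    - (if j < n \<and> (i = 1 \<or> (i - 1, j + 1) \<in> I) then c (i, j + 1) else 0)"
  "residual_term_change (shifted_staircase n) c I (i, j) (i + 1, j) =
    - (if i < j \<and> (i + 1 = j \<or> (i + 1, j - 1) \<in> I) then c (i + 1, j) else 0)"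
  "residual_term_change (shifted_staircase n) c I (i, j) (i - 1, j) =
    - (if 1 < i \<and> (i - 1, j + 1) \<notin> I then 1 + qvar * c (i - 1, j) else 0)"
  "residual_term_change (shifted_staircase n) c I (i, j) (i, j - 1) =
    - (if i < j \<and> (i + 1, j - 1) \<notin> I then 1 + qvar * c (i, j - 1) else 0)"
proof -
  note change = residual_term_change_eq[OF I J p]
  have "i \<ge> 1" "j \<ge> 1" using p by auto
  then have below: "\<not> ple (i, j) (i - 1, j)" "\<not> ple (i, j) (i, j - 1)"
    "(i - 1, j) \<noteq> (i, j)" "(i, j - 1) \<noteq> (i, j)" "ple (i - 1, j) (i, j)" "ple (i, j - 1) (i, j)"
    by (auto simp: ple_def)
  show "residual_term_change (shifted_staircase n) c I (i, j) (i, j) = 1 + (1 + qvar) * c (i, j)"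
    by (simp add: change)
  show "residual_term_change (shifted_staircase n) c I (i, j) (i, j + 1) =
    - (if j < n \<and> (i = 1 \<or> (i - 1, j + 1) \<in> I) then c (i, j + 1) else 0)"
    using Tplus_shifted_staircase_upper_covers(1) by (auto simp: change ple_def)
  show "residual_term_change (shifted_staircase n) c I (i, j) (i + 1, j) =
    - (if i < j \<and> (i + 1 = j \<or> (i + 1, j - 1) \<in> I) then c (i + 1, j) else 0)"
    using Tplus_shifted_staircase_upper_covers(2) by (auto simp: change ple_def)
  show "residual_term_change (shifted_staircase n) c I (i, j) (i - 1, j) =
    - (if 1 < i \<and> (i - 1, j + 1) \<notin> I then 1 + qvar * c (i - 1, j) else 0)"
    using below Tminus_shifted_staircase_lower_covers(1) by (auto simp: change)
  show "residual_term_change (shifted_staircase n) c I (i, j) (i, j - 1) =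
    - (if i < j \<and> (i + 1, j - 1) \<notin> I then 1 + qvar * c (i, j - 1) else 0)"
    using below Tminus_shifted_staircase_lower_covers(2) by (auto simp: change)
qed

lemma residual_insert_shifted_staircase:
  "residual (shifted_staircase n) c (insert (i, j) I) - residual (shifted_staircase n) c I =
    1 + (1 + qvar) * c (i, j)
    - ((if j < n \<and> (i = 1 \<or> (i - 1, j + 1) \<in> I) then c (i, j + 1) else 0)
       + (if 1 < i \<and> (i - 1, j + 1) \<notin> I then 1 + qvar * c (i - 1, j) else 0))
    - ((if i < j \<and> (i + 1 = j \<or> (i + 1, j - 1) \<in> I) then c (i + 1, j) else 0)
       + (if i < j \<and> (i + 1, j - 1) \<notin> I then 1 + qvar * c (i, j - 1) else 0))"
proof -
  have "i - 1 \<noteq> i" "j - 1 \<noteq> j" "i - 1 \<noteq> Suc i" "j - 1 \<noteq> Suc j"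
    using p by auto
  then show ?thesis
    using residual_term_change_neighbours[of c]
    unfolding residual_insert_shifted_staircase_local
    by (simp split del: if_split)
qed

end

definition stair_coeff :: "nat \<Rightarrow> cell \<Rightarrow> ratfun" where
  "stair_coeff n = (\<lambda>(i, j). if i = j then diag_coeff n (i - 1) else off_coeff n (i - 1) (j - 1))"

(* off_coeff n (i - 1) j is the coefficient of (i, j + 1) continued past the staircase: it vanishes
   at the virtual cell (1, n + 1) and equals 1 + q c_(i-1,n) at (i, n + 1) for i > 1. *)
lemma stair_coeff_upper_pair:
  assumes "1 \<le> i" "i \<le> j" "j \<le> n" "a \<Longrightarrow> 1 < i \<and> j < n"
  shows "(if j < n \<and> (i = 1 \<or> a) then stair_coeff n (i, j + 1) else 0)
      + (if 1 < i \<and> \<not> a then 1 + qvar * stair_coeff n (i - 1, j) else 0)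
    = off_coeff n (i - 1) j"
proof -
  have "stair_coeff n (i, j + 1) = off_coeff n (i - 1) j"
    using assms(2) by (simp add: stair_coeff_def)
  moreover have "1 + qvar * stair_coeff n (i - 1, j) = off_coeff n (i - 1) j" if "1 < i"
  proof -
    have "i = Suc (Suc (i - 2))"
      using that by arith
    then obtain k where i: "i = Suc (Suc k)" by blast
    obtain l where j: "j = Suc l"
      using assms by (cases j) auto
    show ?thesis
      using assms(2) by (simp add: i j stair_coeff_def off_coeff_shift)
  qed
  ultimately show ?thesis
    using assms off_coeff_0_boundary[of n] by auto
qed

lemma stair_coeff_lower_pair:
  assumes "1 \<le> i" "i < j" "b \<Longrightarrow> i + 2 \<le> j"
  shows "(if i + 1 = j \<or> b then stair_coeff n (i + 1, j) else 0)
      + (if \<not> b then 1 + qvar * stair_coeff n (i, j - 1) else 0)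
    = off_coeff n i (j - 1)"
proof -
  obtain k where i: "i = Suc k"
    using assms by (cases i) auto
  show ?thesis
  proof (cases "i + 1 = j")
    case True
    then have "\<not> b" "j = Suc (Suc k)"
      using assms i by auto
    then show ?thesis
      using diag_coeff_pair[of n k] by (simp add: i stair_coeff_def algebra_simps)
  next
    case False
    then obtain l where j: "j = Suc (Suc l)" "k < l"
      using assms i by (cases j; cases "j - 1") auto
    then show ?thesis
      using False by (auto simp: i stair_coeff_def off_coeff_shift)
  qed
qed

lemma stair_coeff_balance:
  assumes "1 \<le> i" "i \<le> j"
  shows "1 + (1 + qvar) * stair_coeff n (i, j) =
    off_coeff n (i - 1) j + (if i < j then off_coeff n i (j - 1) else 0)"
proof -
  obtain k l where i: "i = Suc k" and j: "j = Suc l"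
    using assms by (cases i; cases j) auto
  show ?thesis
  proof (cases "i = j")
    case True
    then show ?thesis
      using diag_coeff_recurrence[of n k] by (simp add: i j stair_coeff_def)
  next
    case False
    then have "k < l"
      using assms i j by simp
    then show ?thesis
      using off_coeff_recurrence[of n k l] by (simp add: i j stair_coeff_def)
  qed
qed

lemma residual_stair_coeff_insert:
  assumes I: "I \<in> order_ideals (shifted_staircase n)"
    and J: "insert p I \<in> order_ideals (shifted_staircase n)"
    and p: "p \<in> shifted_staircase n" "p \<notin> I"
  shows "residual (shifted_staircase n) (stair_coeff n) (insert p I) =
    residual (shifted_staircase n) (stair_coeff n) I"
proof -
  obtain i j where ij: "p = (i, j)" by (cases p)
  have ij_bounds: "1 \<le> i" "i \<le> j" "j \<le> n"
    using p ij by auto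
  have a: "1 < i \<and> j < n" if "(i - 1, j + 1) \<in> I"
  proof -
    have "(i - 1, j + 1) \<in> shifted_staircase n"
      using that order_idealsD(1)[OF I] by blast
    then show ?thesis by (simp, linarith)
  qed
  have b: "i + 2 \<le> j" if "(i + 1, j - 1) \<in> I"
  proof -
    have "(i + 1, j - 1) \<in> shifted_staircase n"
      using that order_idealsD(1)[OF I] by blast
    then show ?thesis by (simp, linarith)
  qed
  have lower:
    "(if i < j \<and> (i + 1 = j \<or> (i + 1, j - 1) \<in> I) then stair_coeff n (i + 1, j) else 0)
     + (if i < j \<and> (i + 1, j - 1) \<notin> I then 1 + qvar * stair_coeff n (i, j - 1) else 0)
     = (if i < j then off_coeff n i (j - 1) else 0)"
    using stair_coeff_lower_pair[OF ij_bounds(1) _ b] by auto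
  have upper:
    "(if j < n \<and> (i = 1 \<or> (i - 1, j + 1) \<in> I) then stair_coeff n (i, j + 1) else 0)
     + (if 1 < i \<and> (i - 1, j + 1) \<notin> I then 1 + qvar * stair_coeff n (i - 1, j) else 0)
     = off_coeff n (i - 1) j"
    by (rule stair_coeff_upper_pair[OF ij_bounds a])
  have "residual (shifted_staircase n) (stair_coeff n) (insert p I) -
    residual (shifted_staircase n) (stair_coeff n) I = 0"
    unfolding ij residual_insert_shifted_staircase[OF I J[unfolded ij] p[unfolded ij]]
      upper lower stair_coeff_balance[OF ij_bounds(1,2)]
    by simp
  then show ?thesis
    by simp
qed

lemma residual_shifted_staircase_empty:
  assumes "n \<ge> 1"
  shows "residual (shifted_staircase n) c {} = - c (1, 1)"
proof -
  let ?P = "shifted_staircase n"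
  have empty: "{} \<in> order_ideals ?P"
    by (simp add: order_ideals_def)
  have "Tminus ?P x {} - c x * Tq ?P x {} = (if x = (1, 1) then - c (1, 1) else 0)" for x
  proof -
    obtain a b where x: "x = (a, b)" by (cases x)
    show ?thesis
      using assms by (auto simp: x Tq_def Tminus_def Tplus_shifted_staircase[OF empty])
  qed
  then have "residual ?P c {} = (\<Sum>x\<in>?P. if x = (1, 1) then - c (1, 1) else 0)"
    unfolding residual_def residual_term_def by simp
  also have "\<dots> = - c (1, 1)"
    using assms finite_shifted_staircase by simp
  finally show ?thesis .
qed

lemma residual_stair_coeff:
  assumes "n \<ge> 1" "I \<in> order_ideals (shifted_staircase n)"
  shows "residual (shifted_staircase n) (stair_coeff n) I = qbinom (n + 1) 2 / qint (2 * n)"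
  using finite_shifted_staircase assms(2)
proof (induction rule: order_ideals_induct)
  case empty
  show ?case
    using diag_coeff_0[OF assms(1)] by (simp add: residual_shifted_staircase_empty[OF assms(1)] stair_coeff_def)
next
  case (insert I p)
  then show ?case
    using residual_stair_coeff_insert by simp
qed

theorem theorem5p15:
  fixes n :: nat
  assumes "n \<ge> 1"
  shows "qequiv (shifted_staircase n)
           (\<lambda>I. \<Sum>p\<in>shifted_staircase n. Tminus (shifted_staircase n) p I)
           (\<lambda>I. qbinom (n + 1) 2 / qint (2 * n))"
  using residual_stair_coeff[OF assms] by (rule qequiv_constant_if_residual)

end
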